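(* A $\mathbf{B}$-constrained stabiliser code family cannot admit a universal set of bounded-spread logical operator implementations.
   Context: A code family is a sequence $(\mathcal{C}_l)_{l\in\mathbb{N}}$ of stabiliser codes, $\mathcal{C}_l$ acting on $n=n(l)$ physical qubits; $\mathbf{P}_n$ is the $n$-qubit Pauli group. Quantum channels are written in the Heisenberg picture, $\mathcal{A}(U)=\sum_iA_iUA_i^\dagger$, $\sum_iA_i^\dagger A_i=I$. A logical operator implementation of a logical operator $\bar{A}$ is a channel $\mathcal{A}$ such that, for every logical operator $\bar{U}$ and every representative $U$ of $\bar{U}$, $\mathcal{A}(U)$ is a representative of $\bar{A}\bar{U}\bar{A}^\dagger$ (need not be unitary). The weight $\mathrm{wt}(O)$ is the number of qubits on which $O$ acts non-trivially. The spread of $E\in\mathbf{P}_n$ under $\mathcal{A}$ is $s_{\mathcal{A}}(E)=\mathrm{wt}(\mathcal{A}(E))/\mathrm{wt}(E)$, $s_{\mathcal{A}}=\max_{E\in\mathbf{P}_n}s_{\mathcal{A}}(E)$; $\mathcal{A}$ has bounded spread if there is a constant $C$ independent of $l$ with $s_{\mathcal{A}}\le C$ for all $l$. For a logical operator $\bar{L}$, $d_{\bar{L}}$ is the minimum weight of a representative; $d$ is the code distance. With $\mathbf{L}$ the set of logical operators, $\mathbf{L}_\downarrow=\{\bar{L}\in\mathbf{L}:\exists C\in\mathbb{R}\text{ with } d_{\bar{L}}/d\le C\ \forall l\in\mathbb{N}\}$, $\mathbf{P}_\downarrow$ is the set of logical Pauli operators in $\mathbf{L}_\downarrow$, and $\mathbf{B}$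 is the group generated by $\{\bar{B}\in\mathbf{L}:\bar{B}\bar{P}\bar{B}^\dagger\in\mathbf{L}_\downarrow\text{ for all }\bar{P}\in\mathbf{P}_\downarrow\}$. The code family is $\mathbf{B}$-constrained if $\mathbf{B}$ is not universal. A set of logical operators (or of implementations of them) is universal if the logical operators it implements generate a universal gate set on the logical qubits (dense in the logical unitary group up to phase). *)

theory Defs
  imports Complex_Main "Jordan_Normal_Form.Matrix"
begin

text \<open>Operators on n qubits are 2^n x 2^n complex matrices; the computational basis index
  x < 2^n encodes the qubit values, qubit j being bit j of x.\<close>

definition dag :: "complex mat \<Rightarrow> complex mat" where
  "dag A = mat (dim_col A) (dim_row A) (\<lambda>(i,j). cnj (A $$ (j,i)))"

definition is_unitary :: "nat \<Rightarrow> complex mat \<Rightarrow> bool" where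
  "is_unitary N U \<longleftrightarrow> U \<in> carrier_mat N N \<and> dag U * U = 1\<^sub>m N \<and> U * dag U = 1\<^sub>m N"

text \<open>Single-qubit Pauli matrices: 0 = I, 1 = X, 2 = Y, 3 = Z; entries indexed by bits.\<close>
definition pauli1 :: "nat \<Rightarrow> bool \<Rightarrow> bool \<Rightarrow> complex" where
  "pauli1 a r c =
     (if a = 0 then (if r = c then 1 else 0)
      else if a = 1 then (if r \<noteq> c then 1 else 0)
      else if a = 2 then (if r = c then 0 else if r then \<i> else - \<i>)
      else (if r = c then (if r then -1 else 1) else 0))"

text \<open>The Pauli string c * sigma_{a 0} (x) ... (x) sigma_{a (n-1)}, with the tensor product
  written out entrywise.\<close>
definition pauli_string :: "nat \<Rightarrow> complex \<Rightarrow> (nat \<Rightarrow> nat) \<Rightarrow> complex mat" where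
  "pauli_string n c a =
     mat (2^n) (2^n) (\<lambda>(x,y). c * (\<Prod>j<n. pauli1 (a j) (bit x j) (bit y j)))"

definition pauli_group :: "nat \<Rightarrow> complex mat set" where
  "pauli_group n = {pauli_string n c a | c a. c \<in> {1, -1, \<i>, - \<i>} \<and> (\<forall>j<n. a j < 4)}"

text \<open>O acts trivially on qubit j iff O = I_j (x) O' for an operator O' on the other qubits,
  i.e. entrywise: O vanishes between basis states differing in bit j, and its entries do not
  depend on the (common) value of bit j.\<close>
definition acts_trivially_on :: "nat \<Rightarrow> complex mat \<Rightarrow> nat \<Rightarrow> bool" where
  "acts_trivially_on n M j \<longleftrightarrow>
     (\<forall>x<2^n. \<forall>y<2^n. (bit x j \<noteq> bit y j \<longrightarrow> M $$ (x,y) = 0) \<and>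
                       M $$ (x,y) = M $$ (flip_bit j x, flip_bit j y))"

definition weight :: "nat \<Rightarrow> complex mat \<Rightarrow> nat" where
  "weight n M = card {j. j < n \<and> \<not> acts_trivially_on n M j}"

definition is_channel :: "nat \<Rightarrow> complex mat list \<Rightarrow> bool" where
  "is_channel n Ks \<longleftrightarrow> (\<forall>K\<in>set Ks. K \<in> carrier_mat (2^n) (2^n)) \<and>
     foldr (\<lambda>K acc. dag K * K + acc) Ks (0\<^sub>m (2^n) (2^n)) = 1\<^sub>m (2^n)"

definition apply_channel :: "nat \<Rightarrow> complex mat list \<Rightarrow> complex mat \<Rightarrow> complex mat" where
  "apply_channel n Ks U = foldr (\<lambda>K acc. K * U * dag K + acc) Ks (0\<^sub>m (2^n) (2^n))"

text \<open>A code with n physical and k logical qubits is given by its stabiliser group S and an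
  encoding isometry Enc (2^n x 2^k) onto the code space. Logical operators are unitaries on the
  k logical qubits; an n-qubit operator U represents the logical operator Ubar iff it acts as
  Ubar on the code space: U Enc = Enc Ubar.\<close>

definition code_space :: "nat \<Rightarrow> complex mat set \<Rightarrow> complex vec set" where
  "code_space n S = {\<psi> \<in> carrier_vec (2^n). \<forall>g\<in>S. g *\<^sub>v \<psi> = \<psi>}"

definition representative :: "nat \<Rightarrow> nat \<Rightarrow> complex mat \<Rightarrow> complex mat \<Rightarrow> complex mat \<Rightarrow> bool" where
  "representative n k Enc U Ubar \<longleftrightarrow>
     U \<in> carrier_mat (2^n) (2^n) \<and> Ubar \<in> carrier_mat (2^k) (2^k) \<and> U * Enc = Enc * Ubar"

definition logical_ops :: "nat \<Rightarrow> complex mat set" where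
  "logical_ops k = {U. is_unitary (2^k) U}"

definition stab_code :: "nat \<Rightarrow> nat \<Rightarrow> complex mat set \<Rightarrow> complex mat \<Rightarrow> bool" where
  "stab_code n k S Enc \<longleftrightarrow>
     S \<subseteq> pauli_group n \<and> 1\<^sub>m (2^n) \<in> S \<and> (\<forall>g\<in>S. \<forall>h\<in>S. g * h \<in> S) \<and>
     (\<forall>g\<in>S. \<forall>h\<in>S. g * h = h * g) \<and> - 1\<^sub>m (2^n) \<notin> S \<and>
     Enc \<in> carrier_mat (2^n) (2^k) \<and> dag Enc * Enc = 1\<^sub>m (2^k) \<and>
     {Enc *\<^sub>v v | v. v \<in> carrier_vec (2^k)} = code_space n S \<and>
     (\<forall>P\<in>pauli_group k. \<exists>E\<in>pauli_group n. representative n k Enc E P)"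

definition log_dist :: "nat \<Rightarrow> nat \<Rightarrow> complex mat \<Rightarrow> complex mat \<Rightarrow> nat" where
  "log_dist n k Enc L = (LEAST w. \<exists>U. representative n k Enc U L \<and> weight n U = w)"

definition code_dist :: "nat \<Rightarrow> complex mat set \<Rightarrow> nat" where
  "code_dist n S = (LEAST w. \<exists>E\<in>pauli_group n. weight n E = w \<and> (\<forall>g\<in>S. E * g = g * E) \<and>
                        E \<notin> {c \<cdot>\<^sub>m g | c g. g \<in> S})"

text \<open>A code family: for each l, a stabiliser code on nf l physical qubits with stabiliser group
  Sf l and encoding Encf l, all with the same number k of logical qubits.\<close>

definition L_down :: "(nat \<Rightarrow> nat) \<Rightarrow> nat \<Rightarrow> (nat \<Rightarrow> complex mat set) \<Rightarrow> (nat \<Rightarrow> complex mat) \<Rightarrow> complex mat set" where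
  "L_down nf k Sf Encf = {L \<in> logical_ops k. \<exists>C::real. \<forall>l.
      real (log_dist (nf l) k (Encf l) L) / real (code_dist (nf l) (Sf l)) \<le> C}"

definition P_down :: "(nat \<Rightarrow> nat) \<Rightarrow> nat \<Rightarrow> (nat \<Rightarrow> complex mat set) \<Rightarrow> (nat \<Rightarrow> complex mat) \<Rightarrow> complex mat set" where
  "P_down nf k Sf Encf = L_down nf k Sf Encf \<inter> pauli_group k"

definition B_gens :: "(nat \<Rightarrow> nat) \<Rightarrow> nat \<Rightarrow> (nat \<Rightarrow> complex mat set) \<Rightarrow> (nat \<Rightarrow> complex mat) \<Rightarrow> complex mat set" where
  "B_gens nf k Sf Encf = {B \<in> logical_ops k. \<forall>P\<in>P_down nf k Sf Encf.
      B * P * dag B \<in> L_down nf k Sf Encf}"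

inductive_set gen_group :: "nat \<Rightarrow> complex mat set \<Rightarrow> complex mat set" for k X where
  gen_one: "1\<^sub>m (2^k) \<in> gen_group k X"
| gen_base: "x \<in> X \<Longrightarrow> x \<in> gen_group k X"
| gen_mult: "a \<in> gen_group k X \<Longrightarrow> b \<in> gen_group k X \<Longrightarrow> a * b \<in> gen_group k X"
| gen_inv: "a \<in> gen_group k X \<Longrightarrow> dag a \<in> gen_group k X"

definition mat_dist :: "complex mat \<Rightarrow> complex mat \<Rightarrow> real" where
  "mat_dist A B = sqrt (\<Sum>i<dim_row A. \<Sum>j<dim_col A. (cmod (A $$ (i,j) - B $$ (i,j)))^2)"

definition universal :: "nat \<Rightarrow> complex mat set \<Rightarrow> bool" where
  "universal k X \<longleftrightarrow> (\<forall>V\<in>logical_ops k. \<forall>\<epsilon>>0. \<exists>g\<in>gen_group k X. \<exists>c::complex.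
      cmod c = 1 \<and> mat_dist (c \<cdot>\<^sub>m g) V < \<epsilon>)"

definition B_constrained :: "(nat \<Rightarrow> nat) \<Rightarrow> nat \<Rightarrow> (nat \<Rightarrow> complex mat set) \<Rightarrow> (nat \<Rightarrow> complex mat) \<Rightarrow> bool" where
  "B_constrained nf k Sf Encf \<longleftrightarrow> \<not> universal k (B_gens nf k Sf Encf)"

definition implements :: "nat \<Rightarrow> nat \<Rightarrow> complex mat \<Rightarrow> complex mat list \<Rightarrow> complex mat \<Rightarrow> bool" where
  "implements n k Enc Ks A \<longleftrightarrow> is_channel n Ks \<and> A \<in> logical_ops k \<and>
     (\<forall>U\<in>logical_ops k. \<forall>U'. representative n k Enc U' U \<longrightarrow>
        representative n k Enc (apply_channel n Ks U') (A * U * dag A))"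

text \<open>s_A = max over E in P_n of wt(A(E))/wt(E); bounded spread: s_A \<le> C for all l.\<close>
definition bounded_spread :: "(nat \<Rightarrow> nat) \<Rightarrow> (nat \<Rightarrow> complex mat list) \<Rightarrow> bool" where
  "bounded_spread nf Af \<longleftrightarrow> (\<exists>C::real. \<forall>l. \<forall>E\<in>pauli_group (nf l).
      real (weight (nf l) (apply_channel (nf l) (Af l) E)) / real (weight (nf l) E) \<le> C)"

end

theory Submission
  imports Defs "HOL-Library.FuncSet"
begin

text \<open>An implementation of a logical operator \<open>A\<close> with spread at most \<open>s\<close> maps every Pauli
  representative \<open>E\<close> of a logical Pauli \<open>P\<close> to a representative of \<open>A P A\<^sup>\<dagger>\<close> of weight at most
  \<open>s wt(E)\<close>. By the cleaning lemma a minimum-weight representative \<open>U\<close> of \<open>P\<close>, an arbitrary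
  operator, can be replaced by a Pauli representative supported inside the support of \<open>U\<close>:
  some Pauli term in the expansion of \<open>U\<close> overlaps the logical action of \<open>P\<close>, and a trace
  argument shows that this term commutes with the stabiliser and acts on the code space as a
  phase times \<open>P\<close>. Hence \<open>d(A P A\<^sup>\<dagger>) \<le> s d(P)\<close>, so \<open>A\<close> is one of the generators of \<open>B\<close>, and a
  universal set of such implementations would make \<open>B\<close> universal.\<close>

lemma bit_less_power_nat: "(x::nat) < 2^n \<Longrightarrow> n \<le> j \<Longrightarrow> \<not> bit x j"
  by (metis bit_take_bit_iff not_le take_bit_nat_eq_self_iff)

lemma nat_eq_iff_bits_below:
  "(x::nat) < 2^n \<Longrightarrow> y < 2^n \<Longrightarrow> (\<forall>j<n. bit x j = bit y j) \<longleftrightarrow> x = y"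
  by (metis bit_eq_iff bit_less_power_nat not_le)

lemma flip_bit_less_power_nat: "(x::nat) < 2^n \<Longrightarrow> j < n \<Longrightarrow> flip_bit j x < 2^n"
  by (metis take_bit_flip_bit_eq take_bit_nat_eq_self_iff not_le)

lemma flip_bit_flip_bit_nat [simp]: "flip_bit j (flip_bit j (x::nat)) = x"
  by (rule bit_eq_iff[THEN iffD2]) (auto simp: bit_flip_bit_iff)

lemma sum_flip_bit:
  "j < n \<Longrightarrow> (\<Sum>x<(2::nat)^n. g (flip_bit j x)) = (\<Sum>x<2^n. g x :: 'a::comm_monoid_add)"
  by (rule sum.reindex_bij_witness[where i="flip_bit j" and j="flip_bit j"])
     (auto simp: flip_bit_less_power_nat)

lemma sum_bit_strings_prod:
  fixes f :: "nat \<Rightarrow> bool \<Rightarrow> 'a::comm_semiring_1"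
  shows "(\<Sum>z<(2::nat)^n. \<Prod>j<n. f j (bit z j)) = (\<Prod>j<n. f j False + f j True)"
proof (induction n arbitrary: f)
  case 0
  then show ?case by simp
next
  case (Suc n)
  have split: "(\<Sum>z<2*(m::nat). g z) = (\<Sum>w<m. g (2*w) + g (2*w+1))" for m and g :: "nat \<Rightarrow> 'a"
    by (induction m) (auto simp: add.assoc)
  have "(\<Sum>z<(2::nat)^Suc n. \<Prod>j<Suc n. f j (bit z j))
      = (\<Sum>w<(2::nat)^n. (\<Prod>j<Suc n. f j (bit (2*w) j)) + (\<Prod>j<Suc n. f j (bit (2*w+1) j)))"
    by (simp add: split)
  also have "\<dots> = (\<Sum>w<(2::nat)^n. (f 0 False + f 0 True) * (\<Prod>j<n. f (Suc j) (bit w j)))"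
    by (intro sum.cong refl) (simp only: prod.lessThan_Suc_shift, simp add: bit_Suc bit_0 algebra_simps)
  also have "\<dots> = (f 0 False + f 0 True) * (\<Prod>j<n. f (Suc j) False + f (Suc j) True)"
    by (simp add: sum_distrib_left[symmetric] Suc.IH[of "\<lambda>j. f (Suc j)"])
  also have "\<dots> = (\<Prod>j<Suc n. f j False + f j True)"
    by (simp only: prod.lessThan_Suc_shift)
  finally show ?case .
qed

lemma prod_indicator:
  "(\<Prod>j<(n::nat). if P j then 1 else 0 :: 'a::comm_semiring_1) = (if \<forall>j<n. P j then 1 else 0)"
  by (induction n) (auto simp: less_Suc_eq)

lemma sum_mult_indicator_right:
  assumes "y < (N::nat)"
  shows "(\<Sum>z<N. f z * (if z = y then g z else 0)) = f y * (g y :: 'a::semiring_1)"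
proof -
  have "(\<Sum>z<N. f z * (if z = y then g z else 0)) = (\<Sum>z<N. if z = y then f z * g z else 0)"
    by (rule sum.cong) auto
  then show ?thesis using assms by simp
qed

lemma sum_mult_indicator_left:
  assumes "x < (N::nat)"
  shows "(\<Sum>z<N. (if x = z then g z else 0) * f z) = g x * (f x :: 'a::semiring_1)"
proof -
  have "(\<Sum>z<N. (if x = z then g z else 0) * f z) = (\<Sum>z<N. if x = z then g z * f z else 0)"
    by (rule sum.cong) auto
  then show ?thesis using assms by simp
qed

section \<open>Pauli strings\<close>

lemma nat_cases_pauli_label: "(a::nat) = 0 \<or> a = 1 \<or> a = 2 \<or> a \<ge> 3"
  by auto

definition pauli1_mult :: "nat \<Rightarrow> nat \<Rightarrow> bool \<Rightarrow> bool \<Rightarrow> complex" where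
  "pauli1_mult a b r s = pauli1 a r False * pauli1 b False s + pauli1 a r True * pauli1 b True s"

text \<open>All labels \<open>\<ge> 3\<close> denote \<open>Z\<close> in \<open>pauli1\<close>, hence the \<open>min a 3\<close>.\<close>
definition pauli1_sign :: "nat \<Rightarrow> nat \<Rightarrow> complex" where
  "pauli1_sign a b = (if a = 0 \<or> b = 0 \<or> min a 3 = min b 3 then 1 else -1)"

lemma pauli1_mult_commute: "pauli1_mult a b r s = pauli1_sign a b * pauli1_mult b a r s"
  using nat_cases_pauli_label[of a] nat_cases_pauli_label[of b]
  by (cases r; cases s) (auto simp: pauli1_mult_def pauli1_sign_def pauli1_def)

lemma pauli1_mult_self: "pauli1_mult a a r s = (if r = s then 1 else 0)"
  using nat_cases_pauli_label[of a]
  by (cases r; cases s) (auto simp: pauli1_mult_def pauli1_def)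

lemma cnj_pauli1: "cnj (pauli1 a r s) = pauli1 a s r"
  using nat_cases_pauli_label[of a]
  by (cases r; cases s) (auto simp: pauli1_def)

lemma pauli1_sign_cases: "pauli1_sign a b = 1 \<or> pauli1_sign a b = -1"
  by (simp add: pauli1_sign_def)

lemma prod_sign_cases:
  "(\<And>j. j \<in> A \<Longrightarrow> f j = 1 \<or> f j = -1) \<Longrightarrow> prod f A = 1 \<or> prod f A = (-1 :: 'a::comm_ring_1)"
proof (induction A rule: infinite_finite_induct)
  case (insert x F)
  then have "f x = 1 \<or> f x = -1" "prod f F = 1 \<or> prod f F = -1" by auto
  then show ?case using insert.hyps by auto
qed auto

lemma pauli_string_carrier [simp]: "pauli_string n c a \<in> carrier_mat (2^n) (2^n)"
  by (simp add: pauli_string_def)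

lemma pauli_string_dims [simp]:
  "dim_row (pauli_string n c a) = 2^n" "dim_col (pauli_string n c a) = 2^n"
  by (simp_all add: pauli_string_def)

lemma pauli_string_index:
  "x < 2^n \<Longrightarrow> y < 2^n \<Longrightarrow>
    pauli_string n c a $$ (x,y) = c * (\<Prod>j<n. pauli1 (a j) (bit x j) (bit y j))"
  by (simp add: pauli_string_def)

lemma index_mult_mat_sum:
  "A \<in> carrier_mat m N \<Longrightarrow> B \<in> carrier_mat N p \<Longrightarrow> x < m \<Longrightarrow> y < p \<Longrightarrow>
    (A * B) $$ (x,y) = (\<Sum>z<N. A $$ (x,z) * B $$ (z,y))"
  by (simp add: scalar_prod_def lessThan_atLeast0)

lemma pauli_string_mult_index:
  assumes "x < 2^n" "y < 2^n"
  shows "(pauli_string n c a * pauli_string n d b) $$ (x,y)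
           = c * d * (\<Prod>j<n. pauli1_mult (a j) (b j) (bit x j) (bit y j))"
proof -
  have "(pauli_string n c a * pauli_string n d b) $$ (x,y)
     = c * d * (\<Sum>z<(2::nat)^n. \<Prod>j<n. pauli1 (a j) (bit x j) (bit z j) * pauli1 (b j) (bit z j) (bit y j))"
    using assms
    by (simp add: index_mult_mat_sum[of _ "2^n" "2^n" _ "2^n"] pauli_string_index sum_distrib_left
        prod.distrib algebra_simps del: index_mult_mat(1))
  also have "\<dots> = c * d * (\<Prod>j<n. pauli1_mult (a j) (b j) (bit x j) (bit y j))"
    by (subst sum_bit_strings_prod) (simp add: pauli1_mult_def)
  finally show ?thesis .
qed

lemma pauli_string_commute:
  "pauli_string n c a * pauli_string n d b
     = (\<Prod>j<n. pauli1_sign (a j) (b j)) \<cdot>\<^sub>m (pauli_string n d b * pauli_string n c a)"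
  by (rule eq_matI)
     (auto simp: pauli_string_mult_index pauli1_mult_commute[of "a _" "b _"] prod.distrib
       simp del: index_mult_mat(1))

lemma pauli_string_square: "pauli_string n 1 a * pauli_string n 1 a = 1\<^sub>m (2^n)"
proof (rule eq_matI)
  fix x y assume "x < dim_row (1\<^sub>m (2 ^ n))" "y < dim_col (1\<^sub>m (2 ^ n))"
  then have xy: "x < 2^n" "y < 2^n" by auto
  then show "(pauli_string n 1 a * pauli_string n 1 a) $$ (x, y) = 1\<^sub>m (2 ^ n) $$ (x, y)"
    by (simp add: pauli_string_mult_index pauli1_mult_self prod_indicator nat_eq_iff_bits_below
        del: index_mult_mat(1))
qed auto

lemma pauli_string_smult: "pauli_string n c a = c \<cdot>\<^sub>m pauli_string n 1 a"
  by (rule eq_matI) (auto simp: pauli_string_index)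

lemma pauli_string_one_labels_zero:
  "(\<And>j. j < n \<Longrightarrow> a j = 0) \<Longrightarrow> pauli_string n c a = c \<cdot>\<^sub>m 1\<^sub>m (2^n)"
proof (rule eq_matI)
  fix x y assume a0: "\<And>j. j < n \<Longrightarrow> a j = 0"
    and "x < dim_row (c \<cdot>\<^sub>m 1\<^sub>m (2 ^ n))" "y < dim_col (c \<cdot>\<^sub>m 1\<^sub>m (2 ^ n))"
  then have xy: "x < 2^n" "y < 2^n" by auto
  have "(\<Prod>j<n. pauli1 (a j) (bit x j) (bit y j)) = (\<Prod>j<n. if bit x j = bit y j then 1 else 0)"
    using a0 by (intro prod.cong refl) (simp add: pauli1_def)
  then show "pauli_string n c a $$ (x, y) = (c \<cdot>\<^sub>m 1\<^sub>m (2 ^ n)) $$ (x, y)"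
    using xy by (simp add: pauli_string_index prod_indicator nat_eq_iff_bits_below)
qed auto

lemma dag_carrier [simp]: "A \<in> carrier_mat r c \<Longrightarrow> dag A \<in> carrier_mat c r"
  by (simp add: dag_def)

lemma dag_dims [simp]: "dim_row (dag A) = dim_col A" "dim_col (dag A) = dim_row A"
  by (simp_all add: dag_def)

lemma dag_index [simp]: "i < dim_col A \<Longrightarrow> j < dim_row A \<Longrightarrow> dag A $$ (i,j) = cnj (A $$ (j,i))"
  by (simp add: dag_def)

lemma dag_dag [simp]: "dag (dag A) = A"
  by (rule eq_matI) auto

lemma dag_mult: "A \<in> carrier_mat r m \<Longrightarrow> B \<in> carrier_mat m c \<Longrightarrow> dag (A * B) = dag B * dag A"
  by (rule eq_matI) (auto simp: scalar_prod_def cnj_sum ac_simps intro!: sum.cong)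

lemma dag_pauli_string: "dag (pauli_string n c a) = pauli_string n (cnj c) a"
  by (rule eq_matI) (auto simp: dag_def pauli_string_index cnj_prod cnj_pauli1)

lemma smult_smult_mat: "a \<cdot>\<^sub>m (b \<cdot>\<^sub>m A) = (a * b :: complex) \<cdot>\<^sub>m A"
  by (rule eq_matI) auto

lemma one_smult_mat [simp]: "(1::complex) \<cdot>\<^sub>m A = A"
  by (rule eq_matI) auto

lemma smult_mult_smult:
  "A \<in> carrier_mat r m \<Longrightarrow> B \<in> carrier_mat m c \<Longrightarrow>
    (s \<cdot>\<^sub>m A) * (t \<cdot>\<^sub>m B) = (s * t :: complex) \<cdot>\<^sub>m (A * B)"
  by (simp add: mult_smult_assoc_mat[of _ r m] mult_smult_distrib[of _ r m] smult_smult_mat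
      mult.commute)

lemma is_unitary_mult: "is_unitary N U \<Longrightarrow> is_unitary N V \<Longrightarrow> is_unitary N (U * V)"
proof -
  assume "is_unitary N U" "is_unitary N V"
  then have U: "U \<in> carrier_mat N N" and V: "V \<in> carrier_mat N N"
    and u: "dag U * U = 1\<^sub>m N" "U * dag U = 1\<^sub>m N" and v: "dag V * V = 1\<^sub>m N" "V * dag V = 1\<^sub>m N"
    unfolding is_unitary_def by auto
  have dU: "dag U \<in> carrier_mat N N" and dV: "dag V \<in> carrier_mat N N" using U V by auto
  have "dag V * dag U * (U * V) = dag V * ((dag U * U) * V)"
    using assoc_mult_mat[OF dV dU mult_carrier_mat[OF U V]] assoc_mult_mat[OF dU U V] by simp
  then have 1: "dag (U * V) * (U * V) = 1\<^sub>m N"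
    using u v left_mult_one_mat[OF V] by (simp add: dag_mult[OF U V])
  have "U * V * (dag V * dag U) = U * ((V * dag V) * dag U)"
    using assoc_mult_mat[OF U V mult_carrier_mat[OF dV dU]] assoc_mult_mat[OF V dV dU] by simp
  then have 2: "U * V * dag (U * V) = 1\<^sub>m N"
    using u v left_mult_one_mat[OF dU] by (simp add: dag_mult[OF U V])
  show ?thesis unfolding is_unitary_def using 1 2 U V by auto
qed

lemma is_unitary_dag: "is_unitary N U \<Longrightarrow> is_unitary N (dag U)"
  unfolding is_unitary_def by auto

definition tr :: "complex mat \<Rightarrow> complex" where
  "tr A = (\<Sum>i<dim_row A. A $$ (i,i))"

lemma tr_mult_sum:
  assumes "A \<in> carrier_mat r c" "B \<in> carrier_mat c r"
  shows "tr (A * B) = (\<Sum>i<r. \<Sum>z<c. A $$ (i,z) * B $$ (z,i))"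
  using assms by (simp add: tr_def index_mult_mat_sum carrier_matD del: index_mult_mat(1))

lemma tr_cyclic: "A \<in> carrier_mat r c \<Longrightarrow> B \<in> carrier_mat c r \<Longrightarrow> tr (A * B) = tr (B * A)"
  by (simp add: tr_mult_sum sum.swap[of _ "{..<r}"] ac_simps)

lemma tr_one [simp]: "tr (1\<^sub>m N) = of_nat N"
  by (simp add: tr_def)

lemma tr_smult: "A \<in> carrier_mat N N \<Longrightarrow> tr (s \<cdot>\<^sub>m A) = s * tr A"
  by (simp add: tr_def sum_distrib_left)

lemma tr_anticommuting_unitary:
  assumes M: "M \<in> carrier_mat N N" and R: "R \<in> carrier_mat N N"
    and unitary: "R * dag R = 1\<^sub>m N" "dag R * R = 1\<^sub>m N"
    and anti: "M * R = (-1) \<cdot>\<^sub>m (R * M)"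
  shows "tr M = 0"
proof -
  have RM: "R * M \<in> carrier_mat N N" using R M by simp
  have "tr M = tr ((M * R) * dag R)"
    using M R unitary by (simp add: assoc_mult_mat[of _ N N _ N _ N])
  also have "\<dots> = - tr ((R * M) * dag R)"
    unfolding anti mult_smult_assoc_mat[OF RM dag_carrier[OF R]]
    using RM R by (simp add: tr_smult[of _ N])
  also have "tr ((R * M) * dag R) = tr M"
    using M R RM unitary by (simp add: tr_cyclic[OF RM] assoc_mult_mat[of _ N N _ N _ N, symmetric])
  finally show ?thesis by simp
qed

definition phases :: "complex set" where
  "phases = {1, -1, \<i>, - \<i>}"

lemma cnj_mult_phase: "c \<in> phases \<Longrightarrow> cnj c * c = 1"
  by (auto simp: phases_def)

lemma cnj_phase: "c \<in> phases \<Longrightarrow> cnj c \<in> phases"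
  by (auto simp: phases_def)

lemma inverse_phase: "c \<in> phases \<Longrightarrow> 1 / c \<in> phases"
  by (auto simp: phases_def field_simps)

lemma phase_square_cases: "c \<in> phases \<Longrightarrow> c * c = 1 \<or> c * c = -1"
  by (auto simp: phases_def)

lemma phase_if_square_cases: "(z::complex) * z = 1 \<or> z * z = -1 \<Longrightarrow> z \<in> phases"
proof -
  assume "z * z = 1 \<or> z * z = -1"
  then have "(z - 1) * (z + 1) = 0 \<or> (z - \<i>) * (z + \<i>) = 0"
    by (auto simp: algebra_simps)
  then show ?thesis unfolding phases_def by (auto simp: eq_neg_iff_add_eq_0)
qed

lemma pauli_string_in_pauli_group:
  "c \<in> phases \<Longrightarrow> (\<And>j. j < n \<Longrightarrow> a j < 4) \<Longrightarrow> pauli_string n c a \<in> pauli_group n"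
  unfolding pauli_group_def phases_def by blast

lemma pauli_groupE:
  assumes "P \<in> pauli_group n"
  obtains c a where "P = pauli_string n c a" "c \<in> phases" "\<And>j. j < n \<Longrightarrow> a j < 4"
  using assms unfolding pauli_group_def phases_def by blast

lemma dag_in_pauli_group: "P \<in> pauli_group n \<Longrightarrow> dag P \<in> pauli_group n"
  by (metis pauli_groupE dag_pauli_string cnj_phase pauli_string_in_pauli_group)

lemma pauli_group_unitary:
  assumes "P \<in> pauli_group n"
  shows "P \<in> carrier_mat (2^n) (2^n)" "dag P * P = 1\<^sub>m (2^n)" "P * dag P = 1\<^sub>m (2^n)"
proof -
  obtain c a where P: "P = pauli_string n c a" and c: "c \<in> phases"
    using assms by (rule pauli_groupE)
  have dP: "dag P = cnj c \<cdot>\<^sub>m pauli_string n 1 a"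
    unfolding P dag_pauli_string by (rule pauli_string_smult)
  have "dag P * P = (cnj c * c) \<cdot>\<^sub>m (pauli_string n 1 a * pauli_string n 1 a)"
    "P * dag P = (c * cnj c) \<cdot>\<^sub>m (pauli_string n 1 a * pauli_string n 1 a)"
    unfolding dP unfolding P pauli_string_smult[of n c]
    by (simp_all add: smult_mult_smult[OF pauli_string_carrier pauli_string_carrier])
  then show "P \<in> carrier_mat (2^n) (2^n)" "dag P * P = 1\<^sub>m (2^n)" "P * dag P = 1\<^sub>m (2^n)"
    using cnj_mult_phase[OF c] by (simp_all add: P pauli_string_square mult.commute)
qed

definition commute_up_to_sign :: "complex mat \<Rightarrow> complex mat \<Rightarrow> bool" where
  "commute_up_to_sign A B \<longleftrightarrow> (\<exists>s. (s = 1 \<or> s = -1) \<and> A * B = s \<cdot>\<^sub>m (B * A))"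

lemma commute_up_to_signE:
  assumes "commute_up_to_sign A B"
  obtains "A * B = B * A" | "A * B = (-1) \<cdot>\<^sub>m (B * A)"
  using assms unfolding commute_up_to_sign_def by auto

lemma pauli_group_commute_up_to_sign:
  assumes "P \<in> pauli_group n" "Q \<in> pauli_group n"
  shows "commute_up_to_sign P Q"
proof -
  obtain c a d b where "P = pauli_string n c a" "Q = pauli_string n d b"
    using assms by (metis pauli_groupE)
  moreover have "(\<Prod>j<n. pauli1_sign (a j) (b j)) = 1 \<or> (\<Prod>j<n. pauli1_sign (a j) (b j)) = -1"
    by (rule prod_sign_cases) (simp add: pauli1_sign_cases)
  ultimately show ?thesis
    unfolding commute_up_to_sign_def using pauli_string_commute by blast
qed

lemma commute_up_to_sign_mult:
  assumes A: "A \<in> carrier_mat N N" and B: "B \<in> carrier_mat N N" and G: "G \<in> carrier_mat N N"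
    and "commute_up_to_sign A G" "commute_up_to_sign B G"
  shows "commute_up_to_sign (A * B) G"
proof -
  obtain s t where st: "s = 1 \<or> s = -1" "t = 1 \<or> t = -1"
    and AG: "A * G = s \<cdot>\<^sub>m (G * A)" and BG: "B * G = t \<cdot>\<^sub>m (G * B)"
    using assms(4,5) unfolding commute_up_to_sign_def by blast
  have "(A * B) * G = A * (B * G)" using A B G by (rule assoc_mult_mat)
  also have "\<dots> = t \<cdot>\<^sub>m ((A * G) * B)"
    unfolding BG mult_smult_distrib[OF A mult_carrier_mat[OF G B]] assoc_mult_mat[OF A G B] ..
  also have "\<dots> = (t * s) \<cdot>\<^sub>m (G * (A * B))"
    unfolding AG mult_smult_assoc_mat[OF mult_carrier_mat[OF G A] B] assoc_mult_mat[OF G A B]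
    by (rule smult_smult_mat)
  finally show ?thesis
    unfolding commute_up_to_sign_def using st by (intro exI[of _ "t * s"]) auto
qed

section \<open>Pauli expansion and weights\<close>

definition pauli_labels :: "nat \<Rightarrow> (nat \<Rightarrow> nat) set" where
  "pauli_labels n = PiE {..<n} (\<lambda>_. {..<4})"

definition pauli_coeff :: "nat \<Rightarrow> complex mat \<Rightarrow> (nat \<Rightarrow> nat) \<Rightarrow> complex" where
  "pauli_coeff n U a = (\<Sum>x<2^n. \<Sum>y<2^n. cnj (pauli_string n 1 a $$ (x,y)) * U $$ (x,y))"

lemma finite_pauli_labels [simp]: "finite (pauli_labels n)"
  by (simp add: pauli_labels_def finite_PiE)

lemma pauli_labels_less: "a \<in> pauli_labels n \<Longrightarrow> j < n \<Longrightarrow> a j < 4"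
  by (auto simp: pauli_labels_def PiE_iff)

lemma pauli1_orthogonal:
  "(\<Sum>i<4. cnj (pauli1 i r' s') * pauli1 i r s) = (if r' = r \<and> s' = s then 2 else 0)"
  by (cases r; cases s; cases r'; cases s') (auto simp: numeral_eq_Suc lessThan_Suc pauli1_def)

lemma pauli_string_orthogonal:
  assumes "x < 2^n" "y < 2^n" "x' < 2^n" "y' < 2^n"
  shows "(\<Sum>a\<in>pauli_labels n. cnj (pauli_string n 1 a $$ (x',y')) * pauli_string n 1 a $$ (x,y))
         = (if x' = x \<and> y' = y then 2^n else 0)"
proof -
  have "(\<Sum>a\<in>pauli_labels n. cnj (pauli_string n 1 a $$ (x',y')) * pauli_string n 1 a $$ (x,y))
     = (\<Sum>a\<in>pauli_labels n. \<Prod>j<n. cnj (pauli1 (a j) (bit x' j) (bit y' j)) * pauli1 (a j) (bit x j) (bit y j))"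
    using assms by (simp add: pauli_string_index cnj_prod prod.distrib)
  also have "\<dots> = (\<Prod>j<n. \<Sum>i<4. cnj (pauli1 i (bit x' j) (bit y' j)) * pauli1 i (bit x j) (bit y j))"
    unfolding pauli_labels_def by (rule prod_sum_PiE[symmetric]) auto
  also have "\<dots> = (\<Prod>j<n. if bit x' j = bit x j \<and> bit y' j = bit y j then 2 else 0)"
    by (simp add: pauli1_orthogonal)
  also have "\<dots> = (if \<forall>j<n. bit x' j = bit x j \<and> bit y' j = bit y j then 2^n else 0)"
    by (induction n) (auto simp: less_Suc_eq)
  also have "\<dots> = (if x' = x \<and> y' = y then 2^n else 0)"
    using nat_eq_iff_bits_below[OF assms(3,1)] nat_eq_iff_bits_below[OF assms(4,2)] by metis
  finally show ?thesis .
qed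

lemma pauli_expansion:
  assumes "x < 2^n" "y < 2^n"
  shows "U $$ (x,y) = (1 / 2^n) * (\<Sum>a\<in>pauli_labels n. pauli_coeff n U a * pauli_string n 1 a $$ (x,y))"
proof -
  have "(\<Sum>a\<in>pauli_labels n. pauli_coeff n U a * pauli_string n 1 a $$ (x,y))
    = (\<Sum>x'<2^n. \<Sum>y'<2^n. U $$ (x',y') *
        (\<Sum>a\<in>pauli_labels n. cnj (pauli_string n 1 a $$ (x',y')) * pauli_string n 1 a $$ (x,y)))"
  proof -
    have "(\<Sum>a\<in>pauli_labels n. pauli_coeff n U a * pauli_string n 1 a $$ (x,y))
      = (\<Sum>a\<in>pauli_labels n. \<Sum>x'<2^n. \<Sum>y'<2^n.
          U $$ (x',y') * (cnj (pauli_string n 1 a $$ (x',y')) * pauli_string n 1 a $$ (x,y)))"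
      unfolding pauli_coeff_def sum_distrib_right by (simp add: ac_simps)
    also have "\<dots> = (\<Sum>x'<2^n. \<Sum>y'<2^n. \<Sum>a\<in>pauli_labels n.
          U $$ (x',y') * (cnj (pauli_string n 1 a $$ (x',y')) * pauli_string n 1 a $$ (x,y)))"
      by (subst sum.swap) (simp only: sum.swap[of _ "pauli_labels n"])
    finally show ?thesis by (simp only: sum_distrib_left)
  qed
  also have "\<dots> = (\<Sum>x'<2^n. \<Sum>y'<2^n. U $$ (x',y') * (if x' = x \<and> y' = y then 2^n else 0))"
    using assms by (intro sum.cong refl) (simp add: pauli_string_orthogonal)
  also have "\<dots> = (\<Sum>x'<2^n. U $$ (x',y) * (if x' = x then 2^n else 0))"
    using assms(2) by (intro sum.cong refl) (auto simp: sum_mult_indicator_right)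
  also have "\<dots> = 2^n * U $$ (x,y)"
    using assms by (simp add: sum_mult_indicator_right)
  finally show ?thesis by simp
qed

lemma tr_pauli_expansion:
  assumes U: "U \<in> carrier_mat (2^n) (2^n)" and W: "W \<in> carrier_mat (2^n) (2^n)"
  shows "tr (U * W) = (1 / 2^n) * (\<Sum>a\<in>pauli_labels n. pauli_coeff n U a * tr (pauli_string n 1 a * W))"
proof -
  have "tr (U * W) = (\<Sum>x<2^n. \<Sum>z<2^n.
      (1 / 2^n) * (\<Sum>a\<in>pauli_labels n. pauli_coeff n U a * pauli_string n 1 a $$ (x,z)) * W $$ (z,x))"
    unfolding tr_mult_sum[OF U W] by (intro sum.cong refl) (subst pauli_expansion[of _ n _ U], simp_all)
  also have "\<dots> = (1 / 2^n) * (\<Sum>a\<in>pauli_labels n. pauli_coeff n U a *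
      (\<Sum>x<2^n. \<Sum>z<2^n. pauli_string n 1 a $$ (x,z) * W $$ (z,x)))"
  proof -
    have "(\<Sum>x<2^n. \<Sum>z<2^n. (1 / 2^n) *
        (\<Sum>a\<in>pauli_labels n. pauli_coeff n U a * pauli_string n 1 a $$ (x,z)) * W $$ (z,x))
      = (1 / 2^n) * (\<Sum>x<2^n. \<Sum>z<2^n. \<Sum>a\<in>pauli_labels n.
          pauli_coeff n U a * (pauli_string n 1 a $$ (x,z) * W $$ (z,x)))"
      by (simp add: sum_distrib_left sum_distrib_right ac_simps)
    also have "\<dots> = (1 / 2^n) * (\<Sum>a\<in>pauli_labels n. \<Sum>x<2^n. \<Sum>z<2^n.
          pauli_coeff n U a * (pauli_string n 1 a $$ (x,z) * W $$ (z,x)))"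
      by (subst sum.swap) (simp only: sum.swap[of _ "pauli_labels n"])
    finally show ?thesis by (simp only: sum_distrib_left)
  qed
  finally show ?thesis
    by (simp add: tr_mult_sum[OF pauli_string_carrier W])
qed

lemma pauli_string_flip_bit_index:
  assumes "x < 2^n" "y < 2^n" "j < n" "a j \<noteq> 0" "bit x j = bit y j"
  shows "pauli_string n 1 a $$ (flip_bit j x, flip_bit j y) = - pauli_string n 1 a $$ (x,y)"
proof -
  have j: "j \<in> {..<n}" using assms by simp
  have others: "(\<Prod>i\<in>{..<n}-{j}. pauli1 (a i) (bit (flip_bit j x) i) (bit (flip_bit j y) i))
      = (\<Prod>i\<in>{..<n}-{j}. pauli1 (a i) (bit x i) (bit y i))"
    by (rule prod.cong) (auto simp: bit_flip_bit_iff)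
  have "pauli1 (a j) (\<not> bit x j) (\<not> bit x j) = - pauli1 (a j) (bit x j) (bit x j)"
    using nat_cases_pauli_label[of "a j"] assms(4) by (cases "bit x j") (auto simp: pauli1_def)
  then show ?thesis
    using assms flip_bit_less_power_nat[OF assms(1,3)] flip_bit_less_power_nat[OF assms(2,3)]
    by (simp add: pauli_string_index prod.remove[OF _ j] others bit_flip_bit_iff)
qed

text \<open>Flipping qubit \<open>j\<close> in both indices fixes \<open>U\<close> but negates the Pauli string, since its
  factor on qubit \<open>j\<close> is traceless.\<close>
lemma pauli_coeff_eq_0_if_acts_trivially:
  assumes U: "acts_trivially_on n U j" and j: "j < n" and a: "a j \<noteq> 0"
  shows "pauli_coeff n U a = 0"
proof -
  define t where "t x y = cnj (pauli_string n 1 a $$ (x,y)) * U $$ (x,y)" for x y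
  have flip: "t (flip_bit j x) (flip_bit j y) = - t x y" if xy: "x < 2^n" "y < 2^n" for x y
  proof (cases "bit x j = bit y j")
    case True
    have "U $$ (flip_bit j x, flip_bit j y) = U $$ (x,y)"
      using U xy unfolding acts_trivially_on_def by metis
    then show ?thesis
      using pauli_string_flip_bit_index[of x n y j a, OF xy j a True] by (simp add: t_def)
  next
    case False
    then have "U $$ (x,y) = 0" "U $$ (flip_bit j x, flip_bit j y) = 0"
      using U xy flip_bit_less_power_nat[OF _ j]
      unfolding acts_trivially_on_def by (auto simp: bit_flip_bit_iff)
    then show ?thesis by (simp add: t_def)
  qed
  have "(\<Sum>x<2^n. \<Sum>y<2^n. t x y) = (\<Sum>x<2^n. \<Sum>y<2^n. t (flip_bit j x) (flip_bit j y))"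
    using sum_flip_bit[OF j, of "\<lambda>x. \<Sum>y<2^n. t x (flip_bit j y)"]
    by (simp add: sum_flip_bit[OF j, of "t _"])
  also have "\<dots> = - (\<Sum>x<2^n. \<Sum>y<2^n. t x y)"
    by (simp add: flip sum_negf)
  finally show ?thesis unfolding pauli_coeff_def t_def by simp
qed

lemma pauli_coeff_self: "pauli_coeff n (pauli_string n 1 a) a = 2^n"
proof -
  let ?s = "pauli_string n 1 a"
  have unitary: "dag ?s * ?s = 1\<^sub>m (2^n)"
    by (simp add: dag_pauli_string pauli_string_square)
  have "pauli_coeff n ?s a = (\<Sum>y<(2::nat)^n. (dag ?s * ?s) $$ (y,y))"
    unfolding pauli_coeff_def
    by (subst sum.swap) (simp add: index_mult_mat_sum[of _ "2^n" "2^n" _ "2^n"] del: index_mult_mat(1))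
  also have "\<dots> = 2^n"
    unfolding unitary by simp
  finally show ?thesis .
qed

lemma acts_trivially_on_pauli_string_iff:
  assumes j: "j < n" and c: "c \<noteq> 0"
  shows "acts_trivially_on n (pauli_string n c a) j \<longleftrightarrow> a j = 0"
proof
  assume triv: "acts_trivially_on n (pauli_string n c a) j"
  have "acts_trivially_on n (pauli_string n 1 a) j"
    unfolding acts_trivially_on_def
  proof (intro allI impI conjI)
    fix x y :: nat assume xy: "x < 2^n" "y < 2^n"
    have flips: "flip_bit j x < 2^n" "flip_bit j y < 2^n"
      using xy j by (simp_all add: flip_bit_less_power_nat)
    show "pauli_string n 1 a $$ (x,y) = 0" if "bit x j \<noteq> bit y j"
    proof -
      have "pauli_string n c a $$ (x,y) = 0"
        using triv xy that unfolding acts_trivially_on_def by blast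
      then show ?thesis using c xy by (simp add: pauli_string_index)
    qed
    have "pauli_string n c a $$ (x,y) = pauli_string n c a $$ (flip_bit j x, flip_bit j y)"
      using triv xy unfolding acts_trivially_on_def by blast
    then show "pauli_string n 1 a $$ (x,y) = pauli_string n 1 a $$ (flip_bit j x, flip_bit j y)"
      using c xy flips by (simp add: pauli_string_index)
  qed
  then show "a j = 0"
    using pauli_coeff_eq_0_if_acts_trivially[OF _ j, of _ a] pauli_coeff_self[of n a] by force
next
  assume a0: "a j = 0"
  show "acts_trivially_on n (pauli_string n c a) j"
    unfolding acts_trivially_on_def
  proof (intro allI impI conjI)
    fix x y :: nat assume xy: "x < 2^n" "y < 2^n"
    have flips: "flip_bit j x < 2^n" "flip_bit j y < 2^n"
      using xy j by (simp_all add: flip_bit_less_power_nat)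
    show "pauli_string n c a $$ (x,y) = 0" if "bit x j \<noteq> bit y j"
    proof -
      have "pauli1 (a j) (bit x j) (bit y j) = 0" using a0 that by (simp add: pauli1_def)
      then have "(\<Prod>i<n. pauli1 (a i) (bit x i) (bit y i)) = 0"
        using j by (intro prod_zero) auto
      then show ?thesis using xy by (simp add: pauli_string_index)
    qed
    have "(\<Prod>i<n. pauli1 (a i) (bit x i) (bit y i))
        = (\<Prod>i<n. pauli1 (a i) (bit (flip_bit j x) i) (bit (flip_bit j y) i))"
      by (rule prod.cong) (auto simp: bit_flip_bit_iff a0 pauli1_def)
    then show "pauli_string n c a $$ (x,y) = pauli_string n c a $$ (flip_bit j x, flip_bit j y)"
      using xy flips by (simp add: pauli_string_index)
  qed
qed

lemma weight_pauli_string: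
  "c \<noteq> 0 \<Longrightarrow> weight n (pauli_string n c a) = card {j. j < n \<and> a j \<noteq> 0}"
  unfolding weight_def by (simp add: acts_trivially_on_pauli_string_iff cong: conj_cong)

lemma weight_pauli_string_le:
  assumes "c \<noteq> 0" and "\<And>j. j < n \<Longrightarrow> a j \<noteq> 0 \<Longrightarrow> \<not> acts_trivially_on n U j"
  shows "weight n (pauli_string n c a) \<le> weight n U"
proof -
  have "card {j. j < n \<and> a j \<noteq> 0} \<le> card {j. j < n \<and> \<not> acts_trivially_on n U j}"
    by (rule card_mono) (use assms(2) in auto)
  moreover have "weight n (pauli_string n c a) = card {j. j < n \<and> a j \<noteq> 0}"
    by (rule weight_pauli_string[OF assms(1)])
  ultimately show ?thesis by (simp add: weight_def[of n U])
qed

lemma weight_scalar: "weight n (c \<cdot>\<^sub>m 1\<^sub>m (2^n)) = 0"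
proof -
  have "acts_trivially_on n (c \<cdot>\<^sub>m 1\<^sub>m (2^n)) j" if j: "j < n" for j
    unfolding acts_trivially_on_def
  proof (intro allI impI conjI)
    fix x y :: nat assume xy: "x < 2^n" "y < 2^n"
    then show "bit x j \<noteq> bit y j \<Longrightarrow> (c \<cdot>\<^sub>m 1\<^sub>m (2^n)) $$ (x, y) = 0" by auto
    have "(flip_bit j x = flip_bit j y) = (x = y)" by (metis flip_bit_flip_bit_nat)
    then show "(c \<cdot>\<^sub>m 1\<^sub>m (2^n)) $$ (x, y) = (c \<cdot>\<^sub>m 1\<^sub>m (2^n)) $$ (flip_bit j x, flip_bit j y)"
      using xy j by (simp add: flip_bit_less_power_nat)
  qed
  then show ?thesis unfolding weight_def by simp
qed

definition pauli_Z :: "nat \<Rightarrow> nat \<Rightarrow> complex mat" where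
  "pauli_Z k j = pauli_string k 1 (\<lambda>i. if i = j then 3 else 0)"

definition pauli_X_string :: "nat \<Rightarrow> nat \<Rightarrow> complex mat" where
  "pauli_X_string k x = pauli_string k 1 (\<lambda>i. if bit x i then 1 else 0)"

lemma pauli_Z_index:
  assumes "j < k" "x < 2^k" "y < 2^k"
  shows "pauli_Z k j $$ (x,y) = (if x = y then (if bit x j then -1 else 1) else 0)"
proof -
  have "pauli1 (if i = j then 3 else 0) (bit x i) (bit y i)
     = (if bit x i = bit y i then 1 else 0) * (if i = j then (if bit x j then -1 else 1) else 1)" for i
    by (auto simp: pauli1_def)
  then show ?thesis
    using assms
    by (simp add: pauli_Z_def pauli_string_index prod.distrib prod_indicator nat_eq_iff_bits_below)
qed

lemma pauli_X_string_index:
  assumes "z < 2^k" "y < 2^k"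
  shows "pauli_X_string k x $$ (z,y) = (if \<forall>i<k. bit y i = (bit z i \<noteq> bit x i) then 1 else 0)"
proof -
  have "pauli1 (if bit x i then 1 else 0) (bit z i) (bit y i)
     = (if bit y i = (bit z i \<noteq> bit x i) then 1 else 0)" for i
    by (auto simp: pauli1_def)
  then show ?thesis
    using assms by (simp add: pauli_X_string_def pauli_string_index prod_indicator)
qed

lemma commutes_with_pauli_group_imp_scalar:
  assumes M: "M \<in> carrier_mat (2^k) (2^k)"
    and comm: "\<And>R. R \<in> pauli_group k \<Longrightarrow> M * R = R * M"
  shows "M = M $$ (0,0) \<cdot>\<^sub>m 1\<^sub>m (2^k)"
proof -
  have off_diagonal: "M $$ (x,y) = 0" if xy: "x < 2^k" "y < 2^k" "x \<noteq> y" for x y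
  proof -
    obtain j where j: "j < k" "bit x j \<noteq> bit y j"
      using nat_eq_iff_bits_below[OF xy(1,2)] xy(3) by blast
    have Z: "pauli_Z k j \<in> carrier_mat (2^k) (2^k)" by (simp add: pauli_Z_def)
    have "(M * pauli_Z k j) $$ (x,y)
        = (\<Sum>z<2^k. M $$ (x,z) * (if z = y then (if bit y j then -1 else 1) else 0))"
      using xy j by (auto simp: index_mult_mat_sum[OF M Z] pauli_Z_index intro!: sum.cong)
    also have "\<dots> = M $$ (x,y) * (if bit y j then -1 else 1)"
      by (rule sum_mult_indicator_right[OF xy(2)])
    finally have right: "(M * pauli_Z k j) $$ (x,y) = M $$ (x,y) * (if bit y j then -1 else 1)" .
    have "(pauli_Z k j * M) $$ (x,y)
        = (\<Sum>z<2^k. (if x = z then (if bit x j then -1 else 1) else 0) * M $$ (z,y))"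
      using xy j by (auto simp: index_mult_mat_sum[OF Z M] pauli_Z_index intro!: sum.cong)
    also have "\<dots> = (if bit x j then -1 else 1) * M $$ (x,y)"
      by (rule sum_mult_indicator_left[OF xy(1)])
    finally have left: "(pauli_Z k j * M) $$ (x,y) = (if bit x j then -1 else 1) * M $$ (x,y)" .
    have "pauli_Z k j \<in> pauli_group k"
      unfolding pauli_Z_def by (simp add: pauli_string_in_pauli_group phases_def)
    then have "M $$ (x,y) * (if bit y j then -1 else 1) = (if bit x j then -1 else 1) * M $$ (x,y)"
      using comm left right by metis
    then show ?thesis using j(2) by (cases "bit x j") auto
  qed
  have diagonal: "M $$ (x,x) = M $$ (0,0)" if x: "x < 2^k" for x
  proof -
    have X: "pauli_X_string k x \<in> carrier_mat (2^k) (2^k)" by (simp add: pauli_X_string_def)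
    have entries: "pauli_X_string k x $$ (z,x) = (if z = 0 then 1 else 0)"
      "pauli_X_string k x $$ (0,z) = (if x = z then 1 else 0)" if z: "z < 2^k" for z
    proof -
      have "(\<forall>i<k. bit x i = (bit z i \<noteq> bit x i)) \<longleftrightarrow> z = 0"
        using nat_eq_iff_bits_below[OF z, of 0] by auto
      moreover have "(\<forall>i<k. bit z i = (bit 0 i \<noteq> bit x i)) \<longleftrightarrow> x = z"
        using nat_eq_iff_bits_below[OF x z] by auto
      ultimately show "pauli_X_string k x $$ (z,x) = (if z = 0 then 1 else 0)"
        "pauli_X_string k x $$ (0,z) = (if x = z then 1 else 0)"
        using z x by (simp_all add: pauli_X_string_index)
    qed
    have "(M * pauli_X_string k x) $$ (0,x) = (\<Sum>z<2^k. M $$ (0,z) * (if z = 0 then 1 else 0))"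
      using x entries by (auto simp: index_mult_mat_sum[OF M X] intro!: sum.cong)
    also have "\<dots> = M $$ (0,0)"
      using sum_mult_indicator_right[of 0 "2^k" "\<lambda>z. M $$ (0,z)" "\<lambda>_. 1"] by simp
    finally have right: "(M * pauli_X_string k x) $$ (0,x) = M $$ (0,0)" .
    have "(pauli_X_string k x * M) $$ (0,x) = (\<Sum>z<2^k. (if x = z then 1 else 0) * M $$ (z,x))"
      using x entries by (auto simp: index_mult_mat_sum[OF X M] intro!: sum.cong)
    also have "\<dots> = M $$ (x,x)"
      using sum_mult_indicator_left[OF x, where g="\<lambda>_. 1" and f="\<lambda>z. M $$ (z,x)"] by simp
    finally have left: "(pauli_X_string k x * M) $$ (0,x) = M $$ (x,x)" .
    have "pauli_X_string k x \<in> pauli_group k"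
      unfolding pauli_X_string_def by (simp add: pauli_string_in_pauli_group phases_def)
    then show ?thesis using comm left right by metis
  qed
  show ?thesis
  proof (rule eq_matI)
    fix x y assume "x < dim_row (M $$ (0,0) \<cdot>\<^sub>m 1\<^sub>m (2^k))" "y < dim_col (M $$ (0,0) \<cdot>\<^sub>m 1\<^sub>m (2^k))"
    then have xy: "x < 2^k" "y < 2^k" by simp_all
    then show "M $$ (x,y) = (M $$ (0,0) \<cdot>\<^sub>m 1\<^sub>m (2^k)) $$ (x,y)"
      using diagonal[of x] off_diagonal[of x y] by (cases "x = y") simp_all
  qed (use M in auto)
qed

section \<open>Stabiliser codes and the cleaning lemma\<close>

lemma col_eq_mult_unit_vec:
  fixes A :: "complex mat"
  assumes A: "A \<in> carrier_mat N K" and i: "i < K"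
  shows "col A i = A *\<^sub>v unit_vec K i"
proof (rule eq_vecI)
  fix r assume "r < dim_vec (A *\<^sub>v unit_vec K i)"
  then have r: "r < N" using A by simp
  have "(A *\<^sub>v unit_vec K i) $ r = row A r \<bullet> unit_vec K i"
    using A r by simp
  also have "\<dots> = row A r $ i"
    using scalar_prod_right_unit[OF i] by blast
  finally have "(A *\<^sub>v unit_vec K i) $ r = row A r $ i" .
  then show "col A i $ r = (A *\<^sub>v unit_vec K i) $ r" using A r i by simp
qed (use A in simp)

lemma representative_dag:
  assumes rep: "representative n k Enc V P" and Enc: "Enc \<in> carrier_mat (2^n) (2^k)"
    and V: "dag V * V = 1\<^sub>m (2^n)" and P: "P * dag P = 1\<^sub>m (2^k)"
  shows "dag V * Enc = Enc * dag P"
proof -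
  have Vc: "V \<in> carrier_mat (2^n) (2^n)" and Pc: "P \<in> carrier_mat (2^k) (2^k)"
    and VE: "V * Enc = Enc * P"
    using rep unfolding representative_def by auto
  have dV: "dag V \<in> carrier_mat (2^n) (2^n)" and dP: "dag P \<in> carrier_mat (2^k) (2^k)"
    using Vc Pc by auto
  have "dag V * Enc = dag V * ((Enc * P) * dag P)"
    using P Enc by (simp add: assoc_mult_mat[OF Enc Pc dP])
  also have "\<dots> = (dag V * V) * (Enc * dag P)"
    unfolding VE[symmetric] using Vc Enc dV dP
    by (simp add: assoc_mult_mat[OF Vc Enc dP] assoc_mult_mat[OF dV Vc mult_carrier_mat[OF Enc dP]])
  also have "\<dots> = Enc * dag P"
    using V Enc dP by simp
  finally show ?thesis .
qed

lemma log_dist_le: "representative n k Enc V L \<Longrightarrow> log_dist n k Enc L \<le> weight n V"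
  unfolding log_dist_def by (rule Least_le) blast

lemma log_dist_attained:
  assumes "representative n k Enc V L"
  obtains U where "representative n k Enc U L" "weight n U = log_dist n k Enc L"
proof -
  have "\<exists>w U. representative n k Enc U L \<and> weight n U = w" using assms by blast
  then have "\<exists>U. representative n k Enc U L \<and> weight n U = log_dist n k Enc L"
    unfolding log_dist_def by (rule LeastI_ex)
  then show ?thesis using that by blast
qed

locale stabiliser_code =
  fixes n k :: nat and S :: "complex mat set" and Enc :: "complex mat"
  assumes stab_code: "stab_code n k S Enc"
begin

lemma stabiliser_subset: "S \<subseteq> pauli_group n"
  and Enc_carrier: "Enc \<in> carrier_mat (2^n) (2^k)"
  and dag_Enc_mult_Enc: "dag Enc * Enc = 1\<^sub>m (2^k)"
  and range_Enc: "{Enc *\<^sub>v v | v. v \<in> carrier_vec (2^k)} = code_space n S"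
  and pauli_representative_exists:
    "P \<in> pauli_group k \<Longrightarrow> \<exists>E\<in>pauli_group n. representative n k Enc E P"
  using stab_code unfolding stab_code_def by blast+

lemma dag_Enc_carrier: "dag Enc \<in> carrier_mat (2^k) (2^n)"
  using Enc_carrier by simp

lemma stabiliser_carrier: "g \<in> S \<Longrightarrow> g \<in> carrier_mat (2^n) (2^n)"
  using stabiliser_subset pauli_group_unitary(1) by blast

lemma Enc_mult_cancel:
  assumes A: "A \<in> carrier_mat (2^k) m" and B: "B \<in> carrier_mat (2^k) m" and eq: "Enc * A = Enc * B"
  shows "A = B"
proof -
  have "dag Enc * (Enc * A) = dag Enc * (Enc * B)" using eq by simp
  then show ?thesis
    using A B dag_Enc_mult_Enc
    by (simp add: assoc_mult_mat[OF dag_Enc_carrier Enc_carrier, symmetric])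
qed

lemma col_Enc_in_code_space: "i < 2^k \<Longrightarrow> col Enc i \<in> code_space n S"
  using col_eq_mult_unit_vec[OF Enc_carrier] range_Enc[symmetric] by auto

lemma stabiliser_mult_Enc:
  assumes g: "g \<in> S"
  shows "g * Enc = Enc"
proof (rule mat_col_eqI)
  fix i assume "i < dim_col Enc"
  then have i: "i < 2^k" using Enc_carrier by simp
  show "col (g * Enc) i = col Enc i"
    using col_mult2[OF stabiliser_carrier[OF g] Enc_carrier i] col_Enc_in_code_space[OF i] g
    unfolding code_space_def by simp
qed (use stabiliser_carrier[OF assms] Enc_carrier in auto)

lemma dag_Enc_mult_stabiliser:
  assumes g: "g \<in> S"
  shows "dag Enc * g = dag Enc"
proof -
  have gc: "g \<in> carrier_mat (2^n) (2^n)" by (rule stabiliser_carrier[OF g])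
  have "dag g * Enc = (dag g * g) * Enc"
    unfolding assoc_mult_mat[OF dag_carrier[OF gc] gc Enc_carrier] stabiliser_mult_Enc[OF g] ..
  then have "dag g * Enc = Enc"
    using g stabiliser_subset pauli_group_unitary(2) Enc_carrier by auto
  then have "dag (dag g * Enc) = dag Enc" using Enc_carrier by simp
  then show ?thesis using dag_mult[OF dag_carrier[OF gc] Enc_carrier] by simp
qed

lemma Enc_dag_Enc_mult_code:
  assumes Y: "Y \<in> carrier_mat (2^n) m" and cols: "\<And>i. i < m \<Longrightarrow> col Y i \<in> code_space n S"
  shows "Enc * (dag Enc * Y) = Y"
proof (rule mat_col_eqI)
  fix i assume "i < dim_col Y"
  then have i: "i < m" using Y by simp
  have "col Y i \<in> {Enc *\<^sub>v v | v. v \<in> carrier_vec (2^k)}"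
    using cols[OF i] range_Enc by simp
  then obtain v where v: "v \<in> carrier_vec (2^k)" "col Y i = Enc *\<^sub>v v" by blast
  have "col (Enc * (dag Enc * Y)) i = Enc *\<^sub>v (dag Enc *\<^sub>v (Enc *\<^sub>v v))"
    using col_mult2[OF Enc_carrier mult_carrier_mat[OF dag_Enc_carrier Y] i]
      col_mult2[OF dag_Enc_carrier Y i] v by simp
  also have "dag Enc *\<^sub>v (Enc *\<^sub>v v) = v"
    using assoc_mult_mat_vec[OF dag_Enc_carrier Enc_carrier v(1), symmetric] dag_Enc_mult_Enc v(1)
    by simp
  finally show "col (Enc * (dag Enc * Y)) i = col Y i"
    using v by simp
qed (use Enc_carrier Y in auto)

definition compress :: "complex mat \<Rightarrow> complex mat" where
  "compress \<rho> = dag Enc * (\<rho> * Enc)"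

lemma compress_carrier: "\<rho> \<in> carrier_mat (2^n) (2^n) \<Longrightarrow> compress \<rho> \<in> carrier_mat (2^k) (2^k)"
  unfolding compress_def by (rule mult_carrier_mat[OF dag_Enc_carrier mult_carrier_mat[OF _ Enc_carrier]])

lemma tr_compress_anticommuting_stabiliser:
  assumes \<rho>: "\<rho> \<in> carrier_mat (2^n) (2^n)" and g: "g \<in> S" and anti: "\<rho> * g = (-1) \<cdot>\<^sub>m (g * \<rho>)"
  shows "tr (compress \<rho>) = 0"
proof -
  have gc: "g \<in> carrier_mat (2^n) (2^n)" by (rule stabiliser_carrier[OF g])
  note E = Enc_carrier and dE = dag_Enc_carrier
  have "compress \<rho> = dag Enc * ((\<rho> * g) * Enc)"
    unfolding compress_def by (simp add: assoc_mult_mat[OF \<rho> gc E] stabiliser_mult_Enc[OF g])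
  also have "\<dots> = (-1) \<cdot>\<^sub>m ((dag Enc * g) * (\<rho> * Enc))"
    unfolding anti using \<rho> gc E dE
    by (simp add: mult_smult_assoc_mat[OF mult_carrier_mat[OF gc \<rho>] E] mult_smult_distrib[OF dE mult_carrier_mat[OF gc mult_carrier_mat[OF \<rho> E]]]
        assoc_mult_mat[OF gc \<rho> E] assoc_mult_mat[OF dE gc mult_carrier_mat[OF \<rho> E]])
  also have "\<dots> = (-1) \<cdot>\<^sub>m compress \<rho>"
    unfolding compress_def dag_Enc_mult_stabiliser[OF g] ..
  finally have "tr (compress \<rho>) = - tr (compress \<rho>)"
    using tr_smult[OF compress_carrier[OF \<rho>]] by (metis mult_minus1)
  then show ?thesis by simp
qed

lemma commutes_stabiliser_imp_preserves_code:
  assumes \<rho>: "\<rho> \<in> carrier_mat (2^n) (2^n)" and comm: "\<And>g. g \<in> S \<Longrightarrow> \<rho> * g = g * \<rho>"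
  shows "\<rho> * Enc = Enc * compress \<rho>"
proof -
  have "col (\<rho> * Enc) i \<in> code_space n S" if i: "i < 2^k" for i
  proof -
    have c: "col Enc i \<in> code_space n S" by (rule col_Enc_in_code_space[OF i])
    then have cv: "col Enc i \<in> carrier_vec (2^n)" unfolding code_space_def by blast
    have "g *\<^sub>v (\<rho> *\<^sub>v col Enc i) = \<rho> *\<^sub>v col Enc i" if g: "g \<in> S" for g
    proof -
      have gc: "g \<in> carrier_mat (2^n) (2^n)" by (rule stabiliser_carrier[OF g])
      have "g *\<^sub>v (\<rho> *\<^sub>v col Enc i) = \<rho> *\<^sub>v (g *\<^sub>v col Enc i)"
        using assoc_mult_mat_vec[OF gc \<rho> cv] assoc_mult_mat_vec[OF \<rho> gc cv] comm[OF g] by simp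
      then show ?thesis using c g unfolding code_space_def by simp
    qed
    then show ?thesis
      unfolding code_space_def col_mult2[OF \<rho> Enc_carrier i] using \<rho> cv by simp
  qed
  then have "Enc * (dag Enc * (\<rho> * Enc)) = \<rho> * Enc"
    using Enc_dag_Enc_mult_code[OF mult_carrier_mat[OF \<rho> Enc_carrier]] by blast
  then show ?thesis unfolding compress_def by simp
qed

lemma compress_commute_up_to_sign:
  assumes \<rho>: "\<rho> \<in> carrier_mat (2^n) (2^n)" and preserves: "\<rho> * Enc = Enc * compress \<rho>"
    and sign: "\<And>Q. Q \<in> pauli_group n \<Longrightarrow> commute_up_to_sign \<rho> Q"
    and R: "R \<in> pauli_group k"
  shows "commute_up_to_sign (compress \<rho>) R"
proof -
  define M where "M = compress \<rho>"
  note E = Enc_carrier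
  have M: "M \<in> carrier_mat (2^k) (2^k)" unfolding M_def by (rule compress_carrier[OF \<rho>])
  have Rc: "R \<in> carrier_mat (2^k) (2^k)" by (rule pauli_group_unitary(1)[OF R])
  obtain ER where ER: "ER \<in> pauli_group n" and ER_rep: "representative n k Enc ER R"
    using pauli_representative_exists[OF R] by blast
  have ERc: "ER \<in> carrier_mat (2^n) (2^n)" and ERE: "ER * Enc = Enc * R"
    using ER_rep unfolding representative_def by auto
  obtain s where s: "s = 1 \<or> s = -1" and \<rho>ER: "\<rho> * ER = s \<cdot>\<^sub>m (ER * \<rho>)"
    using sign[OF ER] unfolding commute_up_to_sign_def by blast
  have "Enc * (M * R) = (\<rho> * Enc) * R"
    unfolding preserves M_def[symmetric] by (rule assoc_mult_mat[OF E M Rc, symmetric])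
  also have "\<dots> = \<rho> * (ER * Enc)"
    unfolding ERE by (rule assoc_mult_mat[OF \<rho> E Rc])
  also have "\<dots> = s \<cdot>\<^sub>m (ER * (\<rho> * Enc))"
    unfolding assoc_mult_mat[OF \<rho> ERc E, symmetric] \<rho>ER
    by (simp add: mult_smult_assoc_mat[OF mult_carrier_mat[OF ERc \<rho>] E] assoc_mult_mat[OF ERc \<rho> E])
  also have "\<dots> = Enc * (s \<cdot>\<^sub>m (R * M))"
    using preserves ERE unfolding M_def[symmetric]
    by (simp add: assoc_mult_mat[OF ERc E M, symmetric] assoc_mult_mat[OF E Rc M]
        mult_smult_distrib[OF E mult_carrier_mat[OF Rc M]])
  finally have "M * R = s \<cdot>\<^sub>m (R * M)"
    by (rule Enc_mult_cancel[rotated 2]) (use M Rc in auto)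
  then show ?thesis
    unfolding commute_up_to_sign_def M_def using s by blast
qed

lemma acts_as_scalar_if_tr_compress_nonzero:
  assumes \<rho>: "\<rho> \<in> carrier_mat (2^n) (2^n)"
    and sign: "\<And>Q. Q \<in> pauli_group n \<Longrightarrow> commute_up_to_sign \<rho> Q"
    and tr: "tr (compress \<rho>) \<noteq> 0"
  obtains \<nu> where "\<nu> \<noteq> 0" "\<rho> * Enc = \<nu> \<cdot>\<^sub>m Enc"
proof -
  have "\<rho> * g = g * \<rho>" if g: "g \<in> S" for g
  proof -
    have "commute_up_to_sign \<rho> g" using sign g stabiliser_subset by blast
    then show ?thesis
      by (rule commute_up_to_signE) (use tr_compress_anticommuting_stabiliser[OF \<rho> g] tr in auto)
  qed
  then have preserves: "\<rho> * Enc = Enc * compress \<rho>"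
    by (rule commutes_stabiliser_imp_preserves_code[OF \<rho>])
  define M where "M = compress \<rho>"
  have M: "M \<in> carrier_mat (2^k) (2^k)" unfolding M_def by (rule compress_carrier[OF \<rho>])
  have "M * R = R * M" if R: "R \<in> pauli_group k" for R
    using compress_commute_up_to_sign[OF \<rho> preserves sign R] unfolding M_def[symmetric]
  proof (rule commute_up_to_signE)
    assume "M * R = (-1) \<cdot>\<^sub>m (R * M)"
    then have "tr M = 0"
      using tr_anticommuting_unitary[OF M] pauli_group_unitary[OF R] by blast
    then show ?thesis using tr unfolding M_def by simp
  qed
  then have scalar: "M = M $$ (0,0) \<cdot>\<^sub>m 1\<^sub>m (2^k)"
    by (rule commutes_with_pauli_group_imp_scalar[OF M])
  show ?thesis
  proof
    show "M $$ (0,0) \<noteq> 0"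
      using tr scalar tr_smult[of "1\<^sub>m (2^k)" "2^k" 0] unfolding M_def by force
    show "\<rho> * Enc = M $$ (0,0) \<cdot>\<^sub>m Enc"
      using Enc_carrier unfolding preserves M_def[symmetric]
      by (subst scalar) (simp add: mult_smult_distrib[OF Enc_carrier one_carrier_mat])
  qed
qed

lemma compress_mult_representatives:
  assumes U: "representative n k Enc U P" and E: "representative n k Enc E P"
    and E_unitary: "dag E * E = 1\<^sub>m (2^n)" and P_unitary: "P * dag P = 1\<^sub>m (2^k)" "dag P * P = 1\<^sub>m (2^k)"
  shows "compress (dag E * U) = 1\<^sub>m (2^k)"
proof -
  have Uc: "U \<in> carrier_mat (2^n) (2^n)" and Ec: "E \<in> carrier_mat (2^n) (2^n)"
    and Pc: "P \<in> carrier_mat (2^k) (2^k)" and UE: "U * Enc = Enc * P"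
    using U E unfolding representative_def by auto
  note Enc = Enc_carrier and dE = dag_carrier[OF Ec] and dP = dag_carrier[OF Pc]
  have "compress (dag E * U) = dag Enc * ((dag E * Enc) * P)"
    unfolding compress_def assoc_mult_mat[OF dE Uc Enc] UE assoc_mult_mat[OF dE Enc Pc] ..
  also have "\<dots> = (dag Enc * Enc) * (dag P * P)"
    unfolding representative_dag[OF E Enc E_unitary P_unitary(1)]
    by (simp add: assoc_mult_mat[OF Enc dP Pc] assoc_mult_mat[OF dag_Enc_carrier Enc mult_carrier_mat[OF dP Pc]])
  finally show ?thesis
    using dag_Enc_mult_Enc P_unitary(2) by simp
qed

lemma tr_compress_pauli_expansion:
  assumes X: "X \<in> carrier_mat (2^n) (2^n)" and U: "U \<in> carrier_mat (2^n) (2^n)"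
  shows "tr (compress (X * U))
    = (1 / 2^n) * (\<Sum>a\<in>pauli_labels n. pauli_coeff n U a * tr (compress (X * pauli_string n 1 a)))"
proof -
  define W where "W = Enc * (dag Enc * X)"
  have W: "W \<in> carrier_mat (2^n) (2^n)"
    unfolding W_def by (rule mult_carrier_mat[OF Enc_carrier mult_carrier_mat[OF dag_Enc_carrier X]])
  have cyclic: "tr (compress (X * V)) = tr (V * W)" if V: "V \<in> carrier_mat (2^n) (2^n)" for V
  proof -
    have "compress (X * V) = (dag Enc * X) * (V * Enc)"
      unfolding compress_def using X V Enc_carrier dag_Enc_carrier
      by (simp add: assoc_mult_mat[of _ "2^k" "2^n" _ "2^n" _ "2^k"] assoc_mult_mat[of _ "2^n" "2^n" _ "2^n" _ "2^k"])
    also have "tr \<dots> = tr ((V * Enc) * (dag Enc * X))"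
      using X V Enc_carrier dag_Enc_carrier by (intro tr_cyclic) auto
    finally show ?thesis
      unfolding W_def by (simp add: assoc_mult_mat[OF V Enc_carrier mult_carrier_mat[OF dag_Enc_carrier X]])
  qed
  show ?thesis
    unfolding cyclic[OF U] cyclic[OF pauli_string_carrier] by (rule tr_pauli_expansion[OF U W])
qed

text \<open>Expanding \<open>U\<close> in the Pauli basis, the nonzero overlap of \<open>U\<close> with a Pauli representative
  of \<open>P\<close> must come from some Pauli term of \<open>U\<close>.\<close>
lemma pauli_term_of_representative:
  assumes P: "P \<in> pauli_group k" and U: "representative n k Enc U P"
    and E: "E \<in> pauli_group n" "representative n k Enc E P"
  obtains a where "a \<in> pauli_labels n" "pauli_coeff n U a \<noteq> 0"
    "tr (compress (dag E * pauli_string n 1 a)) \<noteq> 0"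
proof -
  have Uc: "U \<in> carrier_mat (2^n) (2^n)" using U unfolding representative_def by simp
  have "compress (dag E * U) = 1\<^sub>m (2^k)"
    by (rule compress_mult_representatives[OF U E(2)]) (use pauli_group_unitary E(1) P in auto)
  then have "(\<Sum>a\<in>pauli_labels n. pauli_coeff n U a * tr (compress (dag E * pauli_string n 1 a))) \<noteq> 0"
    using tr_compress_pauli_expansion[OF dag_carrier[OF pauli_group_unitary(1)[OF E(1)]] Uc] by auto
  then show ?thesis
    using that by (metis (no_types, lifting) mult_eq_0_iff sum.neutral)
qed

lemma phase_if_acts_as_scaled_pauli:
  assumes P: "P \<in> pauli_group k" and act: "pauli_string n 1 a * Enc = \<nu> \<cdot>\<^sub>m (Enc * P)"
  shows "\<nu> \<in> phases"
proof -
  obtain c b where Pdef: "P = pauli_string k c b" and c: "c \<in> phases"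
    using P by (rule pauli_groupE)
  let ?\<sigma> = "pauli_string n 1 a"
  note Enc = Enc_carrier and \<sigma> = pauli_string_carrier[of n 1 a]
  have Pc: "P \<in> carrier_mat (2^k) (2^k)" and EP: "Enc * P \<in> carrier_mat (2^n) (2^k)"
    using Pdef Enc by simp_all
  have PP: "P * P = (c * c) \<cdot>\<^sub>m 1\<^sub>m (2^k)"
    unfolding Pdef pauli_string_smult[of k c] smult_mult_smult[OF pauli_string_carrier pauli_string_carrier]
      pauli_string_square ..
  have "Enc * 1\<^sub>m (2^k) = ?\<sigma> * (?\<sigma> * Enc)"
    using Enc by (simp add: assoc_mult_mat[OF \<sigma> \<sigma> Enc, symmetric] pauli_string_square)
  also have "\<dots> = \<nu> \<cdot>\<^sub>m (?\<sigma> * (Enc * P))"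
    unfolding act by (rule mult_smult_distrib[OF \<sigma> EP])
  also have "?\<sigma> * (Enc * P) = (?\<sigma> * Enc) * P"
    by (rule assoc_mult_mat[OF \<sigma> Enc Pc, symmetric])
  also have "\<dots> = \<nu> \<cdot>\<^sub>m (Enc * (P * P))"
    unfolding act assoc_mult_mat[OF Enc Pc Pc, symmetric] by (rule mult_smult_assoc_mat[OF EP Pc])
  also have "\<nu> \<cdot>\<^sub>m (\<nu> \<cdot>\<^sub>m (Enc * (P * P))) = Enc * ((\<nu> * \<nu> * (c * c)) \<cdot>\<^sub>m 1\<^sub>m (2^k))"
    unfolding PP using Enc
    by (simp add: mult_smult_distrib[OF Enc one_carrier_mat] smult_smult_mat mult.assoc)
  finally have "1\<^sub>m (2^k) = (\<nu> * \<nu> * (c * c)) \<cdot>\<^sub>m 1\<^sub>m (2^k)"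
    by (rule Enc_mult_cancel[rotated 2]) auto
  then have "\<nu> * \<nu> * (c * c) = 1"
    by (metis index_one_mat(1) index_smult_mat(1) mult_cancel_left1 one_carrier_mat carrier_matD
        pos2 zero_less_power)
  then show ?thesis
    using phase_square_cases[OF c] by (intro phase_if_square_cases) (auto simp: minus_equation_iff)
qed

lemma pauli_term_acts_as_scaled_pauli:
  assumes EP: "EP \<in> pauli_group n" "representative n k Enc EP P" and a: "a \<in> pauli_labels n"
    and overlap: "tr (compress (dag EP * pauli_string n 1 a)) \<noteq> 0"
  obtains \<nu> where "\<nu> \<noteq> 0" "pauli_string n 1 a * Enc = \<nu> \<cdot>\<^sub>m (Enc * P)"
proof -
  let ?\<sigma> = "pauli_string n 1 a"
  have EPc: "EP \<in> carrier_mat (2^n) (2^n)" and EP_Enc: "EP * Enc = Enc * P"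
    and EP_unitary: "EP * dag EP = 1\<^sub>m (2^n)"
    using EP pauli_group_unitary unfolding representative_def by auto
  have \<sigma>: "?\<sigma> \<in> pauli_group n"
    using a by (simp add: pauli_string_in_pauli_group phases_def pauli_labels_less)
  have sign: "commute_up_to_sign (dag EP * ?\<sigma>) Q" if "Q \<in> pauli_group n" for Q
    by (rule commute_up_to_sign_mult[OF dag_carrier[OF EPc] pauli_string_carrier])
       (use that EP(1) \<sigma> in \<open>auto intro: pauli_group_commute_up_to_sign dag_in_pauli_group
         pauli_group_unitary(1)\<close>)
  obtain \<nu> where \<nu>: "\<nu> \<noteq> 0" "(dag EP * ?\<sigma>) * Enc = \<nu> \<cdot>\<^sub>m Enc"
    by (rule acts_as_scalar_if_tr_compress_nonzero[OF
          mult_carrier_mat[OF dag_carrier[OF EPc] pauli_string_carrier] sign overlap])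
  have "EP * ((dag EP * ?\<sigma>) * Enc) = ((EP * dag EP) * ?\<sigma>) * Enc"
    using assoc_mult_mat[OF EPc mult_carrier_mat[OF dag_carrier[OF EPc] pauli_string_carrier] Enc_carrier]
      assoc_mult_mat[OF EPc dag_carrier[OF EPc] pauli_string_carrier] by simp
  then have "?\<sigma> * Enc = EP * ((dag EP * ?\<sigma>) * Enc)"
    unfolding EP_unitary by simp
  then have "?\<sigma> * Enc = \<nu> \<cdot>\<^sub>m (Enc * P)"
    unfolding \<nu>(2) mult_smult_distrib[OF EPc Enc_carrier] EP_Enc .
  then show ?thesis using that \<nu>(1) by blast
qed

theorem cleaning_lemma:
  assumes P: "P \<in> pauli_group k" and U: "representative n k Enc U P"
  obtains E where "E \<in> pauli_group n" "representative n k Enc E P" "weight n E \<le> weight n U"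
proof -
  obtain EP where EP: "EP \<in> pauli_group n" "representative n k Enc EP P"
    using pauli_representative_exists[OF P] by blast
  obtain a where a: "a \<in> pauli_labels n" "pauli_coeff n U a \<noteq> 0"
    and overlap: "tr (compress (dag EP * pauli_string n 1 a)) \<noteq> 0"
    using pauli_term_of_representative[OF P U EP] .
  obtain \<nu> where \<nu>: "\<nu> \<noteq> 0" and act: "pauli_string n 1 a * Enc = \<nu> \<cdot>\<^sub>m (Enc * P)"
    using pauli_term_acts_as_scaled_pauli[OF EP a(1) overlap] .
  define E where "E = pauli_string n (1 / \<nu>) a"
  show ?thesis
  proof
    show "E \<in> pauli_group n"
      unfolding E_def using a(1) phase_if_acts_as_scaled_pauli[OF P act]
      by (simp add: pauli_string_in_pauli_group inverse_phase pauli_labels_less)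
    have "E * Enc = (1 / \<nu>) \<cdot>\<^sub>m (pauli_string n 1 a * Enc)"
      unfolding E_def pauli_string_smult[of n "1 / \<nu>"]
      by (rule mult_smult_assoc_mat[OF pauli_string_carrier Enc_carrier])
    then show "representative n k Enc E P"
      unfolding act using \<nu> EP(2) by (simp add: smult_smult_mat representative_def E_def)
    show "weight n E \<le> weight n U"
      unfolding E_def using \<nu> pauli_coeff_eq_0_if_acts_trivially a(2)
      by (intro weight_pauli_string_le) auto
  qed
qed

section \<open>Logical distances under bounded-spread implementations\<close>

lemma representative_scalar:
  "representative n k Enc (c \<cdot>\<^sub>m 1\<^sub>m (2^n)) (c \<cdot>\<^sub>m 1\<^sub>m (2^k))"
  using Enc_carrier
  by (simp add: representative_def mult_smult_assoc_mat[OF one_carrier_mat Enc_carrier]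
      mult_smult_distrib[OF Enc_carrier one_carrier_mat])

lemma representative_scalar_imp_scalar:
  assumes "representative n k Enc (c \<cdot>\<^sub>m 1\<^sub>m (2^n)) P"
  shows "P = c \<cdot>\<^sub>m 1\<^sub>m (2^k)"
  using assms representative_scalar[of c] Enc_mult_cancel[of P _ "c \<cdot>\<^sub>m 1\<^sub>m (2^k)"]
  unfolding representative_def by auto

lemma log_dist_conj_le:
  assumes impl: "implements n k Enc Ks A" and P: "P \<in> pauli_group k" and C: "C \<ge> 0"
    and spread: "\<And>E. E \<in> pauli_group n \<Longrightarrow> weight n E \<noteq> 0 \<Longrightarrow>
      real (weight n (apply_channel n Ks E)) \<le> C * real (weight n E)"
  shows "real (log_dist n k Enc (A * P * dag A)) \<le> C * real (log_dist n k Enc P)"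
proof -
  obtain U where U: "representative n k Enc U P" "weight n U = log_dist n k Enc P"
    using pauli_representative_exists[OF P] log_dist_attained by blast
  obtain E where E: "E \<in> pauli_group n" "representative n k Enc E P" "weight n E \<le> weight n U"
    using cleaning_lemma[OF P U(1)] .
  have "P \<in> logical_ops k"
    using pauli_group_unitary[OF P] unfolding logical_ops_def is_unitary_def by simp
  then have rep: "representative n k Enc (apply_channel n Ks E) (A * P * dag A)"
    using impl E(2) unfolding implements_def by blast
  show ?thesis
  proof (cases "weight n E = 0")
    case True
    obtain c a where Edef: "E = pauli_string n c a" and c: "c \<in> phases"
      using E(1) by (rule pauli_groupE)
    have "c \<noteq> 0" using c by (auto simp: phases_def)
    then have "{j. j < n \<and> a j \<noteq> 0} = {}"
      using True unfolding Edef weight_pauli_string[OF \<open>c \<noteq> 0\<close>] by simp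
    then have "E = c \<cdot>\<^sub>m 1\<^sub>m (2^n)"
      unfolding Edef by (intro pauli_string_one_labels_zero) blast
    then have "P = c \<cdot>\<^sub>m 1\<^sub>m (2^k)"
      using E(2) representative_scalar_imp_scalar by simp
    moreover have Ac: "A \<in> carrier_mat (2^k) (2^k)" and "A * dag A = 1\<^sub>m (2^k)"
      using impl unfolding implements_def logical_ops_def is_unitary_def by auto
    ultimately have "A * P * dag A = c \<cdot>\<^sub>m 1\<^sub>m (2^k)"
      by (simp add: mult_smult_distrib[OF Ac one_carrier_mat] right_mult_one_mat[OF Ac]
          mult_smult_assoc_mat[OF Ac dag_carrier[OF Ac]])
    then have "log_dist n k Enc (A * P * dag A) = 0"
      using log_dist_le[OF representative_scalar] weight_scalar by (metis le_zero_eq)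
    then show ?thesis using C by simp
  next
    case False
    have "real (log_dist n k Enc (A * P * dag A)) \<le> real (weight n (apply_channel n Ks E))"
      using log_dist_le[OF rep] by simp
    also have "\<dots> \<le> C * real (weight n E)"
      by (rule spread[OF E(1) False])
    also have "\<dots> \<le> C * real (log_dist n k Enc P)"
      using E(3) U(2) C by (simp add: mult_left_mono)
    finally show ?thesis .
  qed
qed

end

lemma bounded_spread_implementation_in_B_gens:
  assumes codes: "\<forall>l. stab_code (nf l) k (Sf l) (Encf l)"
    and impl: "\<forall>l. implements (nf l) k (Encf l) (Af l) A"
    and spread: "bounded_spread nf Af"
  shows "A \<in> B_gens nf k Sf Encf"
proof -
  obtain C where C: "\<forall>l. \<forall>E\<in>pauli_group (nf l).
      real (weight (nf l) (apply_channel (nf l) (Af l) E)) / real (weight (nf l) E) \<le> C"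
    using spread unfolding bounded_spread_def by blast
  have spread_l: "real (weight (nf l) (apply_channel (nf l) (Af l) E)) \<le> max 0 C * real (weight (nf l) E)"
    if "E \<in> pauli_group (nf l)" "weight (nf l) E \<noteq> 0" for l E
  proof -
    have w: "real (weight (nf l) E) > 0" using that(2) by simp
    have "real (weight (nf l) (apply_channel (nf l) (Af l) E)) / real (weight (nf l) E) \<le> C"
      using C that(1) by blast
    then have "real (weight (nf l) (apply_channel (nf l) (Af l) E)) \<le> C * real (weight (nf l) E)"
      using w by (simp add: divide_le_eq)
    also have "\<dots> \<le> max 0 C * real (weight (nf l) E)"
      using w by (intro mult_right_mono) auto
    finally show ?thesis .
  qed
  have A: "A \<in> logical_ops k" using impl unfolding implements_def by blast
  have "A * P * dag A \<in> L_down nf k Sf Encf" if P_down: "P \<in> P_down nf k Sf Encf" for P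
  proof -
    obtain D where P: "P \<in> pauli_group k" "P \<in> logical_ops k"
      and D: "\<forall>l. real (log_dist (nf l) k (Encf l) P) / real (code_dist (nf l) (Sf l)) \<le> D"
      using P_down unfolding P_down_def L_down_def by blast
    have "real (log_dist (nf l) k (Encf l) (A * P * dag A)) / real (code_dist (nf l) (Sf l))
        \<le> max 0 C * max 0 D" for l
    proof -
      have "real (log_dist (nf l) k (Encf l) (A * P * dag A))
          \<le> max 0 C * real (log_dist (nf l) k (Encf l) P)"
        using codes by (intro stabiliser_code.log_dist_conj_le[OF stabiliser_code.intro
            impl[rule_format] P(1) _ spread_l]) auto
      then have "real (log_dist (nf l) k (Encf l) (A * P * dag A)) / real (code_dist (nf l) (Sf l))
          \<le> max 0 C * (real (log_dist (nf l) k (Encf l) P) / real (code_dist (nf l) (Sf l)))"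
        by (simp add: divide_right_mono)
      also have "\<dots> \<le> max 0 C * max 0 D"
        using D by (intro mult_left_mono) (auto intro: max.coboundedI2)
      finally show ?thesis .
    qed
    moreover have "A * P * dag A \<in> logical_ops k"
      using A P(2) unfolding logical_ops_def by (simp add: is_unitary_mult is_unitary_dag)
    ultimately show ?thesis unfolding L_down_def by blast
  qed
  then show ?thesis unfolding B_gens_def using A by blast
qed

lemma gen_group_mono:
  assumes "X \<subseteq> Y"
  shows "g \<in> gen_group k X \<Longrightarrow> g \<in> gen_group k Y"
  by (induction rule: gen_group.induct) (use assms in \<open>auto intro: gen_group.intros\<close>)

lemma universal_mono: "X \<subseteq> Y \<Longrightarrow> universal k X \<Longrightarrow> universal k Y"
  unfolding universal_def using gen_group_mono by blast

theorem theorem2: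
  fixes nf :: "nat \<Rightarrow> nat" and k :: nat
    and Sf :: "nat \<Rightarrow> complex mat set" and Encf :: "nat \<Rightarrow> complex mat"
  assumes codes: "\<forall>l. stab_code (nf l) k (Sf l) (Encf l)"
    and constrained: "B_constrained nf k Sf Encf"
  shows "\<not> (\<exists>Impl :: (complex mat \<times> (nat \<Rightarrow> complex mat list)) set.
             (\<forall>(A, Af) \<in> Impl. (\<forall>l. implements (nf l) k (Encf l) (Af l) A) \<and> bounded_spread nf Af)
             \<and> universal k (fst ` Impl))"
proof
  assume "\<exists>Impl :: (complex mat \<times> (nat \<Rightarrow> complex mat list)) set.
             (\<forall>(A, Af) \<in> Impl. (\<forall>l. implements (nf l) k (Encf l) (Af l) A) \<and> bounded_spread nf Af)
             \<and> universal k (fst ` Impl)"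
  then obtain Impl :: "(complex mat \<times> (nat \<Rightarrow> complex mat list)) set"
    where impl: "\<forall>(A, Af) \<in> Impl. (\<forall>l. implements (nf l) k (Encf l) (Af l) A) \<and> bounded_spread nf Af"
      and universal: "universal k (fst ` Impl)"
    by blast
  have "fst ` Impl \<subseteq> B_gens nf k Sf Encf"
    using impl bounded_spread_implementation_in_B_gens[OF codes] by fastforce
  then have "universal k (B_gens nf k Sf Encf)"
    using universal universal_mono by blast
  then show False
    using constrained unfolding B_constrained_def by blast
qed

end
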